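(* Let $\Omega=\{z\in\mathbb C^{r\times(r+b)}: I_r-zz^*>0\}$ be the type-I domain of rank $r$ and fix $1\le q<r$. Let $\Omega'=\{z'\in\mathbb C^{(r-q)\times(r-q+b)}: I_{r-q}-z'z'^*>0\}$ (type-I of rank $r-q$). For $z\in\mathbb C^{r\times(r+b)}$ with singular values $t_1\ge\dots\ge t_r\ge0$, let $\Psi(z)\in\mathbb C^{(r-q)\times(r-q+b)}$ be the matrix whose $(j,j)$ entry is $t_{q+j}$ for $1\le j\le r-q$ and all other entries $0$. Let $\overline{\partial\Omega_q}=\{z\in\mathbb C^{r\times(r+b)}: t_1=\dots=t_q=1\ge t_{q+1}\}$, the closure of the $q$-th boundary component $\partial\Omega_q=\{z: t_1=\dots=t_q=1>t_{q+1}\}$. Then \[\overline{\partial\Omega_q}=\Big\{z\in\mathbb C^{r\times(r+b)}:\ \Delta^{(\ell)}_\Omega(z,z)=\sum_{i=\max(\ell-(r-q),0)}^{\min(q,\ell)}\binom{q}{i}\Delta^{(\ell-i)}_{\Omega'}\big(\Psi(z),\Psi(z)\big)\ \text{ for all }1\le\ell\le r\Big\}.\]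
   Context: For a type-I domain $\Omega_n=\{z\in\mathbb C^{n\times m}: I_n-zz^*>0\}$ of rank $n$, the Jordan triple determinant is $\Delta(z,w)=\det(I_n-zw^* )$; it satisfies $\Delta(z,z)=\prod_{j=1}^n(1-t_j^2)$ where $t_j$ are the singular values of $z$. Write $\Delta(z,w)=\sum_{\ell=0}^n(-1)^\ell\Delta^{(\ell)}(z,w)$ with $\Delta^{(\ell)}$ sesqui-analytic and homogeneous of bidegree $(\ell,\ell)$; $\Delta^{(0)}=1$. The subscripts $\Omega$, $\Omega'$ indicate which domain's $\Delta^{(\ell)}$ is meant ($\Delta^{(\ell-i)}_{\Omega'}$ with $0\le\ell-i\le r-q$). The boundary $\partial\Omega_q$ equals the orbit description $\{k(e_1+\dots+e_q+\sum_{i>q}t_ie_i)\}$ with $e_i$ the matrix units $E_{ii}$ and $k$ in the stabilizer of $0$ in the identity component of $\mathrm{Aut}(\Omega)$, $1>t_{q+1}\ge\dots\ge t_r\ge0$. *)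

theory Defs
  imports "Jordan_Normal_Form.Char_Poly"
begin

definition ctrans :: "complex mat \<Rightarrow> complex mat" where
  "ctrans w = mat (dim_col w) (dim_row w) (\<lambda>(i,j). cnj (w $$ (j,i)))"

definition jt_det :: "complex mat \<Rightarrow> complex mat \<Rightarrow> complex" where
  "jt_det z w = det (1\<^sub>m (dim_row z) - z * ctrans w)"

(* Delta^(l)(z,w): the bidegree-(l,l) homogeneous part in the expansion
   Delta(z,w) = sum_l (-1)^l Delta^(l)(z,w).  Homogeneity gives
   Delta(c z, w) = sum_l (-1)^l c^l Delta^(l)(z,w), so Delta^(l)(z,w) is
   (-1)^l times the coefficient of c^l of the polynomial c \<mapsto> Delta(c z, w). *)
definition jt_det_part :: "nat \<Rightarrow> complex mat \<Rightarrow> complex mat \<Rightarrow> complex" where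
  "jt_det_part l z w =
     (-1) ^ l * coeff (THE p. \<forall>c. poly p c = jt_det (c \<cdot>\<^sub>m z) w) l"

definition sing_vals :: "complex mat \<Rightarrow> real list" where
  "sing_vals z = (THE ts. length ts = dim_row z \<and> sorted_wrt (\<ge>) ts \<and>
      (\<forall>t\<in>set ts. 0 \<le> t) \<and>
      char_poly (z * ctrans z) = (\<Prod>t\<leftarrow>ts. [:- complex_of_real (t^2), 1:]))"

definition Psi :: "nat \<Rightarrow> nat \<Rightarrow> nat \<Rightarrow> complex mat \<Rightarrow> complex mat" where
  "Psi r b q z = mat (r - q) (r - q + b)
     (\<lambda>(i,j). if i = j then complex_of_real (sing_vals z ! (q + i)) else 0)"

end

theory Submission
  imports Defs "HOL-Computational_Algebra.Field_as_Ring"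
begin

(* The roots of the characteristic polynomial \<chi> of z z\<^sup>* are the squares s_j = t_j^2 of the singular
   values, and det (I - c z z\<^sup>* ) = \<Prod>_j (1 - c s_j) is the reflected polynomial of \<chi>.  Hence
   \<Delta>^(l)(z,z) is (-1)^l times the l-th coefficient of \<Prod>_j (1 - c s_j), and \<Delta>^(l)(\<Psi> z, \<Psi> z) that of
   \<Prod>_{j>q} (1 - c s_j).  The right-hand side of the identity is the corresponding coefficient of
   (1 - c)^q \<Prod>_{j>q} (1 - c s_j), so the identities for 1 \<le> l \<le> r say exactly that
   \<chi> = (x - 1)^q \<Prod>_{j>q} (x - s_j), i.e. that s_1 = ... = s_q = 1.  The remaining condition
   t_{q+1} \<le> 1 is automatic since the t_j decrease. *)

lemma The_poly_eqI:
  fixes p :: "'a::{idom, ring_char_0} poly"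
  assumes "\<And>c. poly p c = f c"
  shows "(THE p. \<forall>c. poly p c = f c) = p"
  using assms by (intro the_equality) (auto simp: poly_eq_poly_eq_iff[symmetric])

lemma mset_eq_if_prod_linear_factors_eq:
  fixes as bs :: "'a::field_gcd list"
  assumes "(\<Prod>a\<leftarrow>as. [:-a, 1:]) = (\<Prod>a\<leftarrow>bs. [:-a, 1:])"
  shows "mset as = mset bs"
proof -
  let ?lin = "\<lambda>a::'a. [:-a, 1:]"
  have prime: "prime (?lin a)" for a
    by (simp add: prime_def prime_elem_linear_field_poly normalize_monic)
  have "image_mset ?lin (mset as) = image_mset ?lin (mset bs)"
  proof (rule prime_factorization_unique')
    show "(\<Prod>p\<in>#image_mset ?lin (mset as). p) = (\<Prod>p\<in>#image_mset ?lin (mset bs). p)"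
      using assms by (simp flip: mset_map add: prod_mset_prod_list)
  qed (use prime in auto)
  then show ?thesis by (rule multiset.inj_map_strong[rotated]) simp
qed

lemma prod_linear_factors_eq_power_iff:
  fixes as :: "'a::idom list"
  shows "(\<Prod>a\<leftarrow>as. [:-a, 1:]) = [:-c, 1:] ^ length as \<longleftrightarrow> (\<forall>a\<in>set as. a = c)"
proof
  assume eq: "(\<Prod>a\<leftarrow>as. [:-a, 1:]) = [:-c, 1:] ^ length as"
  show "\<forall>a\<in>set as. a = c"
  proof
    fix a assume "a \<in> set as"
    then have "poly (\<Prod>a\<leftarrow>as. [:-a, 1:]) a = 0"
      by (rule linear_poly_root)
    with eq show "a = c" by simp
  qed
qed (induction as; simp)

lemma coeff_one_minus_X_power:
  "coeff ([:1, -1:] ^ q :: 'a::comm_ring_1 poly) i = of_nat (q choose i) * (-1) ^ i"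
proof (cases "i \<le> q")
  case False
  then have "degree ([:1, -1:] ^ q :: 'a poly) < i"
    using degree_power_le[of "[:1, -1::'a:]" q] by simp
  with False show ?thesis by (simp add: coeff_eq_0 binomial_eq_0)
qed (simp add: coeff_linear_poly_power)

lemma signed_coeff_one_minus_X_power_mult:
  fixes Q :: "'a::comm_ring_1 poly"
  assumes "degree Q \<le> m"
  shows "(-1) ^ l * coeff ([:1, -1:] ^ q * Q) l =
    (\<Sum>i = l - m..min q l. of_nat (q choose i) * ((-1) ^ (l - i) * coeff Q (l - i)))"
proof -
  have sign: "(-1) ^ l * (-1) ^ i = ((-1) ^ (l - i) :: 'a)" if "i \<le> l" for i
    using that by (simp flip: power_add add: neg_one_power_add_eq_neg_one_power_diff)
  have "(-1) ^ l * coeff ([:1, -1:] ^ q * Q) l =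
      (\<Sum>i\<le>l. (-1) ^ l * (of_nat (q choose i) * (-1) ^ i * coeff Q (l - i)))"
    by (simp add: coeff_mult coeff_one_minus_X_power sum_distrib_left)
  also have "\<dots> = (\<Sum>i\<le>l. of_nat (q choose i) * ((-1) ^ (l - i) * coeff Q (l - i)))"
    by (rule sum.cong) (auto simp: sign[symmetric] mult_ac)
  also have "\<dots> = (\<Sum>i = l - m..min q l. of_nat (q choose i) * ((-1) ^ (l - i) * coeff Q (l - i)))"
  proof (rule sum.mono_neutral_right)
    show "\<forall>i\<in>{..l} - {l - m..min q l}. of_nat (q choose i) * ((-1) ^ (l - i) * coeff Q (l - i)) = 0"
      using assms by (auto simp: coeff_eq_0 binomial_eq_0)
  qed auto
  finally show ?thesis .
qed

lemma reflect_poly_inject: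
  assumes "degree p = degree q"
  shows "reflect_poly p = reflect_poly q \<longleftrightarrow> p = q"
proof
  assume reflect_eq: "reflect_poly p = reflect_poly q"
  show "p = q"
  proof (rule poly_eqI)
    fix n
    show "coeff p n = coeff q n"
    proof (cases "n \<le> degree p")
      case True
      then have "coeff p n = coeff (reflect_poly p) (degree p - n)"
        and "coeff q n = coeff (reflect_poly q) (degree q - n)"
        using assms by (auto simp: coeff_reflect_poly)
      then show ?thesis by (simp add: reflect_eq assms)
    qed (use assms in \<open>simp add: coeff_eq_0\<close>)
  qed
qed simp

lemma signed_coeffs_reflect_eq_iff_X_minus_one_power_mult:
  fixes P Q :: "'a::idom poly"
  assumes P: "monic P" "degree P = q + m" and Q: "monic Q" "degree Q = m"
  shows "(\<forall>l\<in>{1..q + m}. (-1) ^ l * coeff (reflect_poly P) l =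
      (\<Sum>i = l - m..min q l. of_nat (q choose i) * ((-1) ^ (l - i) * coeff (reflect_poly Q) (l - i))))
    \<longleftrightarrow> P = [:-1, 1:] ^ q * Q" (is "?identities \<longleftrightarrow> _")
proof -
  define R where "R = [:-1, 1:] ^ q * Q"
  have E: "monic ([:-1, 1:] ^ q :: 'a poly)" "degree ([:-1, 1:] ^ q :: 'a poly) = q"
    by (simp_all add: coeff_linear_poly_power degree_linear_power)
  have "[:-1, 1:] ^ q \<noteq> (0 :: 'a poly)" "Q \<noteq> 0"
    using Q by auto
  then have "degree R = q + m"
    using E Q by (simp add: R_def degree_mult_eq)
  moreover have "monic R"
    unfolding R_def lead_coeff_mult using E Q by simp
  ultimately have R: "monic R" "degree R = q + m" by simp_all
  have "reflect_poly [:-1, 1:] = ([:1, -1:] :: 'a poly)"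
    by (simp add: reflect_poly_def)
  then have "reflect_poly R = [:1, -1:] ^ q * reflect_poly Q"
    by (simp add: R_def reflect_poly_mult reflect_poly_power)
  moreover have "degree (reflect_poly Q) \<le> m"
    using Q degree_reflect_poly_le[of Q] by simp
  ultimately have "?identities \<longleftrightarrow> (\<forall>l\<in>{1..q + m}. coeff (reflect_poly P) l = coeff (reflect_poly R) l)"
    by (simp add: signed_coeff_one_minus_X_power_mult[symmetric])
  also have "\<dots> \<longleftrightarrow> reflect_poly P = reflect_poly R"
  proof
    assume coeffs: "\<forall>l\<in>{1..q + m}. coeff (reflect_poly P) l = coeff (reflect_poly R) l"
    show "reflect_poly P = reflect_poly R"
    proof (rule poly_eqI)
      fix l
      consider "l = 0" | "l \<in> {1..q + m}" | "q + m < l" by fastforce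
      then show "coeff (reflect_poly P) l = coeff (reflect_poly R) l"
        by cases (use coeffs P R in \<open>auto simp: coeff_reflect_poly\<close>)
    qed
  qed simp
  also have "\<dots> \<longleftrightarrow> P = R"
    using P R by (simp add: reflect_poly_inject)
  finally show ?thesis unfolding R_def .
qed

lemma det_one_minus_smult:
  fixes A :: "'a::field mat"
  assumes A: "A \<in> carrier_mat n n"
  shows "det (1\<^sub>m n - c \<cdot>\<^sub>m A) = poly (reflect_poly (char_poly A)) c"
proof (cases "c = 0")
  case True
  have "1\<^sub>m n - c \<cdot>\<^sub>m A = 1\<^sub>m n" using A True by (intro eq_matI) auto
  then show ?thesis using True degree_monic_char_poly[OF A] by simp
next
  case False
  have "1\<^sub>m n - c \<cdot>\<^sub>m A = c \<cdot>\<^sub>m (- char_matrix A (inverse c))"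
    using A False by (intro eq_matI) (auto simp: char_matrix_def field_simps)
  then have "det (1\<^sub>m n - c \<cdot>\<^sub>m A) = c ^ n * poly (char_poly A) (inverse c)"
    using A by (simp add: char_poly_matrix[OF A] char_matrix_def)
  then show ?thesis
    using False degree_monic_char_poly[OF A] by (simp add: poly_reflect_poly_nz)
qed

lemma ctrans_carrier [simp]: "z \<in> carrier_mat n m \<Longrightarrow> ctrans z \<in> carrier_mat m n"
  by (simp add: ctrans_def)

lemma cscalar_prod_mult_mat_vec_ctrans:
  assumes z: "z \<in> carrier_mat n m" and w: "w \<in> carrier_vec m" and v: "v \<in> carrier_vec n"
  shows "(z *\<^sub>v w) \<bullet>c v = w \<bullet>c (ctrans z *\<^sub>v v)"
proof -
  have "(z *\<^sub>v w) \<bullet>c v = (\<Sum>i<n. \<Sum>k<m. z $$ (i,k) * w $ k * cnj (v $ i))"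
    using z w v by (simp add: scalar_prod_def sum_distrib_right lessThan_atLeast0)
  also have "\<dots> = (\<Sum>k<m. \<Sum>i<n. z $$ (i,k) * w $ k * cnj (v $ i))"
    by (rule sum.swap)
  also have "\<dots> = w \<bullet>c (ctrans z *\<^sub>v v)"
    using z w v by (simp add: scalar_prod_def sum_distrib_left lessThan_atLeast0 ctrans_def mult_ac)
  finally show ?thesis .
qed

lemma eigenvalue_mult_ctrans_nonneg:
  assumes z: "z \<in> carrier_mat n m" and a: "eigenvalue (z * ctrans z) a"
  shows "0 \<le> a"
proof -
  obtain v where v: "v \<in> carrier_vec n" "v \<noteq> 0\<^sub>v n" and av: "(z * ctrans z) *\<^sub>v v = a \<cdot>\<^sub>v v"
    using a z unfolding eigenvalue_def eigenvector_def by auto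
  define w where "w = ctrans z *\<^sub>v v"
  have w: "w \<in> carrier_vec m" unfolding w_def using ctrans_carrier[OF z] v by auto
  have "a * (v \<bullet>c v) = ((z * ctrans z) *\<^sub>v v) \<bullet>c v"
    using av v by simp
  also have "\<dots> = (z *\<^sub>v w) \<bullet>c v"
    using z v by (simp add: w_def assoc_mult_mat_vec[of _ n m _ n])
  also have "\<dots> = w \<bullet>c w"
    using z v w by (simp add: cscalar_prod_mult_mat_vec_ctrans w_def)
  finally have "0 \<le> a * (v \<bullet>c v)" by auto
  moreover have "0 < v \<bullet>c v" using v by simp
  ultimately show ?thesis
    by (auto simp: less_eq_complex_def less_complex_def zero_le_mult_iff)
qed

lemma rect_diag_mult_ctrans:
  assumes "n \<le> m"
  shows "mat n m (\<lambda>(i, j). if i = j then d i else 0) * ctrans (mat n m (\<lambda>(i, j). if i = j then d i else 0))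
    = mat n n (\<lambda>(i, j). if i = j then d i * cnj (d i) else 0)" (is "?D * ctrans ?D = ?E")
proof (rule eq_matI)
  fix i j assume ij: "i < dim_row ?E" "j < dim_col ?E"
  then have "(?D * ctrans ?D) $$ (i, j)
      = (\<Sum>k = 0..<m. (if i = k then d i else 0) * cnj (if j = k then d j else 0))"
    using assms by (simp add: ctrans_def scalar_prod_def)
  also have "\<dots> = (\<Sum>k = 0..<m. if k = i then (if i = j then d i * cnj (d i) else 0) else 0)"
    by (rule sum.cong) auto
  also have "\<dots> = ?E $$ (i, j)"
    using ij assms by simp
  finally show "(?D * ctrans ?D) $$ (i, j) = ?E $$ (i, j)" .
qed (simp_all add: ctrans_def)

lemma char_poly_diag_mat:
  "char_poly (mat n n (\<lambda>(i, j). if i = j then d i else 0)) = (\<Prod>i\<leftarrow>[0..<n]. [:- d i, 1:])"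
proof -
  have "diag_mat (mat n n (\<lambda>(i, j). if i = j then d i else 0)) = map d [0..<n]"
    by (simp add: diag_mat_def)
  then show ?thesis
    by (subst char_poly_upper_triangular[of _ n]) (auto simp: upper_triangular_def o_def)
qed

lemma jt_det_part_eq_coeff_reflect_char_poly:
  assumes z: "z \<in> carrier_mat n m" and w: "w \<in> carrier_mat n m"
  shows "jt_det_part l z w = (-1) ^ l * coeff (reflect_poly (char_poly (z * ctrans w))) l"
proof -
  have "jt_det (c \<cdot>\<^sub>m z) w = poly (reflect_poly (char_poly (z * ctrans w))) c" for c
    using z w det_one_minus_smult[of "z * ctrans w" n c]
    by (simp add: jt_det_def mult_smult_assoc_mat[OF z ctrans_carrier[OF w]])
  then show ?thesis
    unfolding jt_det_part_def by (subst The_poly_eqI) auto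
qed

lemma sorted_nonneg_eq_if_prod_square_factors_eq:
  fixes ts us :: "real list"
  assumes "sorted_wrt (\<ge>) ts" "\<forall>t\<in>set ts. 0 \<le> t"
    and "sorted_wrt (\<ge>) us" "\<forall>t\<in>set us. 0 \<le> t"
    and "(\<Prod>t\<leftarrow>ts. [:- complex_of_real (t^2), 1:]) = (\<Prod>t\<leftarrow>us. [:- complex_of_real (t^2), 1:])"
  shows "ts = us"
proof -
  let ?sq = "\<lambda>t. complex_of_real (t^2)"
  have "mset (map ?sq ts) = mset (map ?sq us)"
    using assms(5) by (intro mset_eq_if_prod_linear_factors_eq) (simp add: o_def)
  then have "image_mset ?sq (mset ts) = image_mset ?sq (mset us)"
    by simp
  then have "mset ts = mset us"
    by (rule multiset.inj_map_strong[rotated])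
      (use assms(2,4) in \<open>auto simp flip: of_real_power simp: power2_eq_iff_nonneg\<close>)
  then have "sort (rev ts) = rev us" and "sort (rev ts) = rev ts"
    using assms(1,3) by (auto intro!: properties_for_sort simp: sorted_wrt_rev)
  then show ?thesis by simp
qed

lemma sing_vals_exist:
  assumes z: "z \<in> carrier_mat n m"
  shows "\<exists>ts. length ts = n \<and> sorted_wrt (\<ge>) ts \<and> (\<forall>t\<in>set ts. 0 \<le> t) \<and>
      char_poly (z * ctrans z) = (\<Prod>t\<leftarrow>ts. [:- complex_of_real (t^2), 1:])"
proof -
  have A: "z * ctrans z \<in> carrier_mat n n" using z by simp
  obtain as where cp: "char_poly (z * ctrans z) = (\<Prod>a\<leftarrow>as. [:-a, 1:])" and len: "length as = n"
    using char_poly_factorized[OF A] by blast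
  have as_nonneg: "0 \<le> a" if "a \<in> set as" for a
    using eigenvalue_mult_ctrans_nonneg[OF z] eigenvalue_root_char_poly[OF A] cp
      linear_poly_root[OF that]
    by simp
  define ts where "ts = rev (sort (map (\<lambda>a. sqrt (Re a)) as))"
  have "(\<Prod>t\<leftarrow>ts. [:- complex_of_real (t^2), 1:]) = (\<Prod>a\<leftarrow>as. [:- complex_of_real (sqrt (Re a) ^ 2), 1:])"
    unfolding ts_def by (simp flip: prod_mset_prod_list add: image_mset.compositionality o_def)
  also have "\<dots> = (\<Prod>a\<leftarrow>as. [:-a, 1:])"
    using as_nonneg by (intro arg_cong[where f = prod_list] map_cong)
      (auto simp: less_eq_complex_def complex_eq_iff)
  finally have "char_poly (z * ctrans z) = (\<Prod>t\<leftarrow>ts. [:- complex_of_real (t^2), 1:])"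
    using cp by simp
  moreover have "length ts = n" "sorted_wrt (\<ge>) ts" "\<forall>t\<in>set ts. 0 \<le> t"
    using len as_nonneg by (auto simp: ts_def sorted_wrt_rev less_eq_complex_def)
  ultimately show ?thesis by blast
qed

lemma
  assumes "z \<in> carrier_mat n m"
  shows length_sing_vals: "length (sing_vals z) = n"
    and sorted_sing_vals: "sorted_wrt (\<ge>) (sing_vals z)"
    and sing_vals_nonneg: "\<forall>t\<in>set (sing_vals z). 0 \<le> t"
    and char_poly_sing_vals: "char_poly (z * ctrans z) = (\<Prod>t\<leftarrow>sing_vals z. [:- complex_of_real (t^2), 1:])"
proof -
  let ?P = "\<lambda>ts. length ts = dim_row z \<and> sorted_wrt (\<ge>) ts \<and> (\<forall>t\<in>set ts. 0 \<le> t) \<and>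
      char_poly (z * ctrans z) = (\<Prod>t\<leftarrow>ts. [:- complex_of_real (t^2), 1:])"
  have "\<exists>!ts. ?P ts"
    using sing_vals_exist[OF assms] sorted_nonneg_eq_if_prod_square_factors_eq assms by auto
  then have "?P (sing_vals z)"
    unfolding sing_vals_def by (rule theI')
  with assms show "length (sing_vals z) = n" "sorted_wrt (\<ge>) (sing_vals z)"
    "\<forall>t\<in>set (sing_vals z). 0 \<le> t"
    "char_poly (z * ctrans z) = (\<Prod>t\<leftarrow>sing_vals z. [:- complex_of_real (t^2), 1:])"
    by auto
qed

lemma char_poly_Psi_mult_ctrans:
  assumes "z \<in> carrier_mat r n" and "q \<le> r"
  shows "char_poly (Psi r b q z * ctrans (Psi r b q z)) =
    (\<Prod>t\<leftarrow>drop q (sing_vals z). [:- complex_of_real (t^2), 1:])"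
proof -
  let ?ts = "sing_vals z"
  have "Psi r b q z * ctrans (Psi r b q z) =
      mat (r - q) (r - q) (\<lambda>(i, j). if i = j then complex_of_real ((?ts ! (q + i))^2) else 0)"
    unfolding Psi_def by (auto simp: rect_diag_mult_ctrans power2_eq_square intro!: cong_mat)
  moreover have "drop q ?ts = map (\<lambda>i. ?ts ! (q + i)) [0..<r - q]"
    using length_sing_vals[OF assms(1)] by (intro nth_equalityI) auto
  ultimately show ?thesis
    by (simp add: char_poly_diag_mat o_def)
qed

lemma char_poly_eq_X_minus_one_power_mult_Psi_iff:
  assumes z: "z \<in> carrier_mat r n" and "q \<le> r"
  shows "char_poly (z * ctrans z) = [:-1, 1:] ^ q * char_poly (Psi r b q z * ctrans (Psi r b q z))
    \<longleftrightarrow> (\<forall>j<q. sing_vals z ! j = 1)" (is "?\<chi> = _ * ?\<chi>' \<longleftrightarrow> _")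
proof -
  let ?ts = "sing_vals z"
  let ?sq = "\<lambda>t. complex_of_real (t^2)"
  have len: "length (take q ?ts) = q"
    using length_sing_vals[OF z] assms(2) by simp
  have "?\<chi> = (\<Prod>a\<leftarrow>map ?sq (take q ?ts). [:-a, 1:]) * ?\<chi>'"
    unfolding char_poly_sing_vals[OF z] char_poly_Psi_mult_ctrans[OF assms]
    by (simp flip: prod_list.append map_append add: o_def)
  moreover have "?\<chi>' \<noteq> 0"
    unfolding char_poly_Psi_mult_ctrans[OF assms] by (auto simp: prod_list_zero_iff)
  ultimately have "?\<chi> = [:-1, 1:] ^ q * ?\<chi>'
      \<longleftrightarrow> (\<Prod>a\<leftarrow>map ?sq (take q ?ts). [:-a, 1:]) = [:-1, 1:] ^ length (map ?sq (take q ?ts))"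
    using len by simp
  also have "\<dots> \<longleftrightarrow> (\<forall>t\<in>set (take q ?ts). ?sq t = 1)"
    using prod_linear_factors_eq_power_iff[of "map ?sq (take q ?ts)" 1] by simp
  also have "\<dots> \<longleftrightarrow> (\<forall>t\<in>set (take q ?ts). t = 1)"
  proof (rule ball_cong[OF refl])
    fix t assume "t \<in> set (take q ?ts)"
    then have "0 \<le> t" using sing_vals_nonneg[OF z] by (auto dest: in_set_takeD)
    have "?sq t = 1 \<longleftrightarrow> t^2 = 1" by (rule of_real_eq_1_iff)
    also have "\<dots> \<longleftrightarrow> t = 1" using \<open>0 \<le> t\<close> by (auto simp: power2_eq_1_iff)
    finally show "?sq t = 1 \<longleftrightarrow> t = 1" .
  qed
  also have "\<dots> \<longleftrightarrow> (\<forall>j<q. ?ts ! j = 1)"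
    using len by (auto simp: all_set_conv_all_nth)
  finally show ?thesis .
qed

lemma jt_det_part_identity_iff_char_poly_eq:
  assumes z: "z \<in> carrier_mat r n" and "q \<le> r"
  shows "(\<forall>l\<in>{1..r}. jt_det_part l z z =
            (\<Sum>i = max (l - (r - q)) 0 .. min q l.
               of_nat (q choose i) * jt_det_part (l - i) (Psi r b q z) (Psi r b q z)))
    \<longleftrightarrow> char_poly (z * ctrans z) = [:-1, 1:] ^ q * char_poly (Psi r b q z * ctrans (Psi r b q z))"
proof -
  have Psi: "Psi r b q z \<in> carrier_mat (r - q) (r - q + b)"
    by (simp add: Psi_def)
  have "z * ctrans z \<in> carrier_mat (q + (r - q)) (q + (r - q))"
    using z assms(2) by simp
  note \<chi> = degree_monic_char_poly[OF this]
  have "Psi r b q z * ctrans (Psi r b q z) \<in> carrier_mat (r - q) (r - q)"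
    using Psi by simp
  note \<chi>' = degree_monic_char_poly[OF this]
  show ?thesis
    using signed_coeffs_reflect_eq_iff_X_minus_one_power_mult[of "char_poly (z * ctrans z)" q "r - q"
        "char_poly (Psi r b q z * ctrans (Psi r b q z))"] \<chi> \<chi>' assms(2)
    by (simp add: jt_det_part_eq_coeff_reflect_char_poly[OF z z]
        jt_det_part_eq_coeff_reflect_char_poly[OF Psi Psi])
qed

lemma first_sing_vals_eq_one_iff_jt_det_part_identity:
  assumes z: "z \<in> carrier_mat r n" and "1 \<le> q" "q < r"
  shows "(\<forall>j<q. sing_vals z ! j = 1) \<and> sing_vals z ! q \<le> 1 \<longleftrightarrow>
    (\<forall>l\<in>{1..r}. jt_det_part l z z =
      (\<Sum>i = max (l - (r - q)) 0 .. min q l.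
         of_nat (q choose i) * jt_det_part (l - i) (Psi r b q z) (Psi r b q z)))"
proof -
  have "sing_vals z ! q \<le> sing_vals z ! (q - 1)"
    using sorted_sing_vals[OF z] length_sing_vals[OF z] assms(2,3)
    by (auto simp: sorted_wrt_iff_nth_less)
  with assms(2) have "(\<forall>j<q. sing_vals z ! j = 1) \<longrightarrow> sing_vals z ! q \<le> 1"
    by auto
  then show ?thesis
    unfolding jt_det_part_identity_iff_char_poly_eq[OF z less_imp_le[OF assms(3)]]
      char_poly_eq_X_minus_one_power_mult_Psi_iff[OF z less_imp_le[OF assms(3)]] by blast
qed

theorem theoremA2:
  fixes r b q :: nat
  assumes "1 \<le> q" and "q < r"
  shows "{z \<in> carrier_mat r (r + b).
            (\<forall>j<q. sing_vals z ! j = 1) \<and> sing_vals z ! q \<le> 1}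
       = {z \<in> carrier_mat r (r + b).
            \<forall>l\<in>{1..r}. jt_det_part l z z =
              (\<Sum>i = max (l - (r - q)) 0 .. min q l.
                 of_nat (q choose i) * jt_det_part (l - i) (Psi r b q z) (Psi r b q z))}"
  using first_sing_vals_eq_one_iff_jt_det_part_identity[OF _ assms] by blast

end
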